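(* There exist constants $C>0$ and $n_0$ such that for every $n\ge n_0$ and every assignment $x:V\to\{-1,1\}$ with $x_{-\mathbf v}=-x_{\mathbf v}$ for all $\mathbf v\in V$, the total weight of clauses of $\Phi_n$ satisfied by $x$ is at most $\frac{3(\sqrt{21}-4)}{2}+\frac{C}{n}$.
   Context: Let $\mathbf e_1,\dots,\mathbf e_n$ be the standard basis of $\mathbb R^n$ and $V=\{\frac{1}{\sqrt3}(b_1\mathbf e_i+b_2\mathbf e_j+b_3\mathbf e_k): b_1,b_2,b_3\in\{-1,1\},\ 1\le i<j<k\le n\}$. To each $\mathbf v\in V$ associate a Boolean variable $x_{\mathbf v}\in\{-1,1\}$, with the identification $x_{-\mathbf v}=-x_{\mathbf v}$. $\mathrm{NAE}(y_1,\dots,y_k)$ is satisfied iff not all $y_i$ are equal. $\mathcal C_3$ is the set of clauses $\mathrm{NAE}(x_{\mathbf v_1},x_{\mathbf v_2},x_{\mathbf v_3})$ with $\mathbf v_1=\frac{1}{\sqrt3}(s_1\mathbf e_{i_1}-s_2\mathbf e_{i_2}+s_4\mathbf e_{i_4})$, $\mathbf v_2=\frac{1}{\sqrt3}(s_2\mathbf e_{i_2}-s_3\mathbf e_{i_3}+s_5\mathbf e_{i_5})$, $\mathbf v_3=\frac{1}{\sqrt3}(s_3\mathbf e_{i_3}-s_1\mathbf e_{i_1}+s_6\mathbf e_{i_6})$ for distinct indices $i_1,\dots,i_6\in[n]$ and signs $s_1,\dots,s_6\in\{-1,1\}$. $\mathcal C_5$ is the set of clauses $\mathrm{NAE}(x_{\mathbf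 v_1},\dots,x_{\mathbf v_5})$ with $\mathbf v_j=\frac{1}{\sqrt3}(s_1\mathbf e_{i_1}+s_{2j}\mathbf e_{i_{2j}}+s_{2j+1}\mathbf e_{i_{2j+1}})$ for $j\in\{1,2,3,4\}$ and $\mathbf v_5=\frac{1}{\sqrt3}(s_{10}\mathbf e_{i_{10}}+s_{11}\mathbf e_{i_{11}}+s_{12}\mathbf e_{i_{12}})$ for distinct indices $i_1,\dots,i_{12}\in[n]$ and signs $s_1,\dots,s_{12}\in\{-1,1\}$. $\Phi_n$ is the MAX NAE-SAT instance on variables $\{x_{\mathbf v}\}$ with clause set $\mathcal C_3\cup\mathcal C_5$, where each clause of $\mathcal C_3$ has weight $\frac{1-3/\sqrt{21}}{|\mathcal C_3|}$ and each clause of $\mathcal C_5$ has weight $\frac{3}{\sqrt{21}\,|\mathcal C_5|}$ (total weight $1$). *)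

theory Defs
  imports Complex_Main
begin

text \<open>Vectors of R^n are represented as functions nat => real (coordinates 1..n,
  zero elsewhere). ind i is the standard basis vector e_i.\<close>

definition ind :: "nat \<Rightarrow> nat \<Rightarrow> real" where
  "ind i = (\<lambda>t. if t = i then 1 else 0)"

definition vec3 :: "real \<Rightarrow> nat \<Rightarrow> real \<Rightarrow> nat \<Rightarrow> real \<Rightarrow> nat \<Rightarrow> (nat \<Rightarrow> real)" where
  "vec3 a i b j c k = (\<lambda>t. (a * ind i t + b * ind j t + c * ind k t) / sqrt 3)"

definition Vset :: "nat \<Rightarrow> (nat \<Rightarrow> real) set" where
  "Vset n = {v. \<exists>i j k b1 b2 b3. 1 \<le> i \<and> i < j \<and> j < k \<and> k \<le> n \<and>
      b1 \<in> {-1, 1} \<and> b2 \<in> {-1, 1} \<and> b3 \<in> {-1, 1} \<and> v = vec3 b1 i b2 j b3 k}"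

definition NAE :: "real list \<Rightarrow> bool" where
  "NAE ys \<longleftrightarrow> \<not> (\<forall>y \<in> set ys. y = hd ys)"

definition params :: "nat \<Rightarrow> nat \<Rightarrow> (nat \<Rightarrow> nat) \<Rightarrow> (nat \<Rightarrow> real) \<Rightarrow> bool" where
  "params n m i s \<longleftrightarrow> inj_on i {1..m} \<and> i ` {1..m} \<subseteq> {1..n} \<and> (\<forall>k\<in>{1..m}. s k \<in> {-1, 1})"

text \<open>A clause is recorded as the (ordered) list of the vectors whose variables it contains.\<close>
definition C3 :: "nat \<Rightarrow> (nat \<Rightarrow> real) list set" where
  "C3 n = {[vec3 (s 1) (i 1) (- s 2) (i 2) (s 4) (i 4),
            vec3 (s 2) (i 2) (- s 3) (i 3) (s 5) (i 5),
            vec3 (s 3) (i 3) (- s 1) (i 1) (s 6) (i 6)] | i s. params n 6 i s}"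

definition C5 :: "nat \<Rightarrow> (nat \<Rightarrow> real) list set" where
  "C5 n = {map (\<lambda>j. vec3 (s 1) (i 1) (s (2*j)) (i (2*j)) (s (2*j+1)) (i (2*j+1))) [1,2,3,4]
           @ [vec3 (s 10) (i 10) (s 11) (i 11) (s 12) (i 12)] | i s. params n 12 i s}"

definition sat_weight :: "nat \<Rightarrow> ((nat \<Rightarrow> real) \<Rightarrow> real) \<Rightarrow> real" where
  "sat_weight n x =
     (\<Sum>c\<in>C3 n. if NAE (map x c) then (1 - 3 / sqrt 21) / real (card (C3 n)) else 0)
   + (\<Sum>c\<in>C5 n. if NAE (map x c) then 3 / (sqrt 21 * real (card (C5 n))) else 0)"

end

(*
  Write a literal (i, s) for the signed basis vector s e_i, let X(a, b, c) be the value of x at the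
  normalised sum of three literals (0 if two of them share an index), and D(a) = sum_{b,c} X(a, b, c);
  oddness of x makes D odd under negation of a. Clauses are images of tuples of literals with distinct
  indices, and signed permutations of the coordinates act transitively on these tuples compatibly with
  the clause maps, so every clause is hit equally often and the satisfied fraction is an average over
  tuples; allowing repeated indices changes it by O(1/n). Writing NAE_3 = 1 - (1 + y1 y2 + y2 y3 + y3 y1)/4
  and NAE_5 = 1 - (prod (1 + y_i) + prod (1 - y_i))/32, the sums over all tuples factor through D:
  with beta = D / (2n)^2 and t = E beta^2, the C3 part is (3 + 3t)/4 and the C5 part is
  (15 - 6t - E beta^4)/16 <= (15 - 6t - t^2)/16. The weighted combination is a concave quadratic in t
  whose maximum, attained at t = 2 sqrt 21 - 9, is 3 (sqrt 21 - 4)/2.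
*)

theory Submission
  imports Defs "HOL-Analysis.Convex"
begin

section \<open>Averages and elementary inequalities\<close>

lemma sum_PiE_insert:
  assumes "k \<notin> J" "finite J"
  shows "(\<Sum>f\<in>PiE (insert k J) B. G f) = (\<Sum>y\<in>B k. \<Sum>f\<in>PiE J B. G (f(k := y)))"
proof -
  have "(\<Sum>f\<in>PiE (insert k J) B. G f) = (\<Sum>(y, f)\<in>B k \<times> PiE J B. G (f(k := y)))"
    unfolding PiE_insert_eq by (subst sum.reindex[OF inj_combinator[OF assms(1)]]) (simp add: case_prod_unfold)
  then show ?thesis
    by (simp add: sum.cartesian_product)
qed

lemma card_fibre_le_if_equivariant:
  assumes "finite D" "t \<in> D" "\<sigma> ` D \<subseteq> D" "inj_on \<sigma> D" "\<And>u. u \<in> D \<Longrightarrow> g (\<sigma> u) = \<tau> (g u)"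
  shows "card {u\<in>D. g u = g t} \<le> card {u\<in>D. g u = g (\<sigma> t)}"
proof (rule card_inj_on_le)
  show "inj_on \<sigma> {u \<in> D. g u = g t}"
    using assms(4) by (rule inj_on_subset) auto
  show "\<sigma> ` {u \<in> D. g u = g t} \<subseteq> {u \<in> D. g u = g (\<sigma> t)}"
    using assms(2,3,5) by auto
qed (use assms(1) in simp)

lemma sum_comp_if_fibres_card:
  assumes "finite D" "\<And>t. t \<in> D \<Longrightarrow> card {u\<in>D. g u = g t} = K"
  shows "(\<Sum>t\<in>D. h (g t)) = real K * (\<Sum>c\<in>g ` D. h c)"
proof -
  have "(\<Sum>t\<in>D. h (g t)) = (\<Sum>c\<in>g ` D. \<Sum>t\<in>{u\<in>D. g u = c}. h (g t))"
    by (rule sum.image_gen[OF assms(1)])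
  also have "\<dots> = (\<Sum>c\<in>g ` D. real K * h c)"
    using assms(2) by (intro sum.cong) auto
  finally show ?thesis
    by (simp add: sum_distrib_left)
qed

lemma average_image_eq_if_transitive:
  fixes h :: "'b \<Rightarrow> real"
  assumes "finite D" "t0 \<in> D"
    and transitive: "\<And>t t'. t \<in> D \<Longrightarrow> t' \<in> D \<Longrightarrow>
      \<exists>\<sigma> \<tau>. \<sigma> ` D \<subseteq> D \<and> inj_on \<sigma> D \<and> \<sigma> t = t' \<and> (\<forall>u\<in>D. g (\<sigma> u) = \<tau> (g u))"
  shows "(\<Sum>c\<in>g ` D. h c) / card (g ` D) = (\<Sum>t\<in>D. h (g t)) / card D"
proof -
  define K where "K = card {u\<in>D. g u = g t0}"
  have fibre_le: "card {u\<in>D. g u = g t} \<le> card {u\<in>D. g u = g t'}" if tt': "t \<in> D" "t' \<in> D" for t t'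
  proof -
    obtain \<sigma> \<tau> where \<sigma>: "\<sigma> ` D \<subseteq> D" "inj_on \<sigma> D" "\<sigma> t = t'" "\<And>u. u \<in> D \<Longrightarrow> g (\<sigma> u) = \<tau> (g u)"
      using transitive[OF tt'] by blast
    have "card {u\<in>D. g u = g t} \<le> card {u\<in>D. g u = g (\<sigma> t)}"
      using \<sigma>(1,2,4) by (rule card_fibre_le_if_equivariant[OF assms(1) tt'(1)])
    then show ?thesis
      using \<sigma>(3) by simp
  qed
  have fibre: "card {u\<in>D. g u = g t} = K" if "t \<in> D" for t
    unfolding K_def using fibre_le[OF that assms(2)] fibre_le[OF assms(2) that] by simp
  have "K > 0"
    unfolding K_def using assms(1,2) by (auto simp: card_gt_0_iff)
  moreover have "real (card D) = real K * card (g ` D)"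
    using sum_comp_if_fibres_card[OF assms(1) fibre, of "\<lambda>_. 1"] by simp
  ultimately show ?thesis
    using sum_comp_if_fibres_card[OF assms(1) fibre, of h] by (simp add: field_simps)
qed

lemma average_subset_ge:
  fixes F :: "'a \<Rightarrow> real"
  assumes "finite A" "D \<subseteq> A" "D \<noteq> {}" "\<And>f. f \<in> A \<Longrightarrow> \<bar>F f\<bar> \<le> B"
  shows "(\<Sum>f\<in>A. F f) / card A - 2 * B * card (A - D) / card A \<le> (\<Sum>f\<in>D. F f) / card D"
proof -
  define a where "a = real (card A)"
  define d where "d = real (card D)"
  define sD where "sD = (\<Sum>f\<in>D. F f)"
  define sR where "sR = (\<Sum>f\<in>A - D. F f)"
  have fin: "finite D"
    using assms(1,2) by (rule finite_subset[rotated])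
  have d: "d > 0"
    unfolding d_def using fin assms(3) by (simp add: card_gt_0_iff)
  have ad: "real (card (A - D)) = a - d"
    unfolding a_def d_def using assms(2) fin card_mono[OF assms(1,2)] by (simp add: card_Diff_subset of_nat_diff)
  then have "d \<le> a"
    by (metis diff_ge_0_iff_ge of_nat_0_le_iff)
  have "\<bar>sD\<bar> \<le> d * B"
    unfolding sD_def d_def using assms(2,4) by (intro order_trans[OF sum_abs sum_bounded_above]) auto
  then have "\<bar>sD / d\<bar> \<le> B"
    using d by (simp add: abs_divide divide_le_eq mult.commute)
  then have "- (sD / d) * (a - d) \<le> B * (a - d)"
    using \<open>d \<le> a\<close> by (intro mult_right_mono abs_le_D2) auto
  moreover have "\<bar>sR\<bar> \<le> (a - d) * B"
    unfolding sR_def ad[symmetric] using assms(4) by (intro order_trans[OF sum_abs sum_bounded_above]) auto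
  ultimately have "sR - sD / d * (a - d) \<le> 2 * B * (a - d)"
    by (auto simp: abs_le_iff algebra_simps)
  moreover have "(sD + sR) / a - sD / d = (sR - sD / d * (a - d)) / a"
    using d \<open>d \<le> a\<close> by (simp add: field_simps)
  ultimately have "(sD + sR) / a - sD / d \<le> 2 * B * (a - d) / a"
    using d \<open>d \<le> a\<close> by (simp add: divide_right_mono)
  moreover have "(\<Sum>f\<in>A. F f) = sD + sR"
    unfolding sD_def sR_def using assms(1,2) by (simp add: sum.subset_diff)
  ultimately show ?thesis
    unfolding a_def d_def sD_def ad by simp
qed

lemma bij_betw_extend_to_permutation:
  assumes "finite U" "A \<subseteq> U" "B \<subseteq> U" "bij_betw q A B"
  obtains p where "bij_betw p U U" "\<And>i. i \<in> A \<Longrightarrow> p i = q i"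
proof -
  have "card (U - A) = card (U - B)"
    using assms bij_betw_same_card[OF assms(4)] by (simp add: card_Diff_subset finite_subset)
  then obtain r where r: "bij_betw r (U - A) (U - B)"
    using finite_same_card_bij assms(1) by blast
  define p where "p i = (if i \<in> A then q i else r i)" for i
  have "bij_betw p A B"
    using assms(4) by (rule bij_betw_cong[THEN iffD1, rotated]) (simp add: p_def)
  moreover have "bij_betw p (U - A) (U - B)"
    using r by (rule bij_betw_cong[THEN iffD1, rotated]) (simp add: p_def)
  ultimately have "bij_betw p (A \<union> (U - A)) (B \<union> (U - B))"
    by (rule bij_betw_combine) auto
  moreover have "A \<union> (U - A) = U" "B \<union> (U - B) = U"
    using assms by auto
  ultimately show ?thesis
    using that[of p] by (simp add: p_def)
qed

lemma NAE3_eq_poly: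
  assumes "a \<in> {-1,1}" "b \<in> {-1,1}" "c \<in> {-1,1}"
  shows "(of_bool (NAE [a, b, c]) :: real) = 1 - (1 + a * b + b * c + c * a) / 4"
  using assms unfolding NAE_def by auto

lemma NAE5_eq_poly:
  assumes "a \<in> {-1,1}" "b \<in> {-1,1}" "c \<in> {-1,1}" "d \<in> {-1,1}" "g \<in> {-1,1}"
  shows "(of_bool (NAE [a, b, c, d, g]) :: real) =
    1 - ((1 + a) * (1 + b) * (1 + c) * (1 + d) * (1 + g) + (1 - a) * (1 - b) * (1 - c) * (1 - d) * (1 - g)) / 32"
  using assms unfolding NAE_def by auto

lemma sum_squares_squared_le:
  fixes d :: "'a \<Rightarrow> real"
  shows "(\<Sum>a\<in>A. d a ^ 2) ^ 2 \<le> card A * (\<Sum>a\<in>A. d a ^ 4)"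
  using sum_squared_le_sum_of_squares[of "\<lambda>a. d a ^ 2" A] by (simp add: mult.commute flip: power_mult)

lemma prod_list_le_power:
  fixes ys :: "'a::linordered_semidom list"
  assumes "\<And>y. y \<in> set ys \<Longrightarrow> 0 \<le> y \<and> y \<le> c"
  shows "prod_list ys \<le> c ^ length ys"
  using assms
proof (induction ys)
  case (Cons y ys)
  have y: "0 \<le> y" "y \<le> c"
    using Cons.prems by auto
  have "0 \<le> prod_list ys"
    using Cons.prems by (intro prod_list_nonneg) auto
  moreover have "prod_list ys \<le> c ^ length ys"
    using Cons by auto
  ultimately have "y * prod_list ys \<le> c * c ^ length ys"
    using y order_trans[OF y] by (intro mult_mono)
  then show ?case
    by simp
qed simp

lemma average_one_minus:
  fixes F :: "'a \<Rightarrow> real"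
  assumes "finite D" "D \<noteq> {}"
  shows "(\<Sum>t\<in>D. 1 - F t) / card D = 1 - (\<Sum>t\<in>D. F t) / card D"
  using assms by (simp add: sum_subtractf diff_divide_distrib)

text \<open>The left-hand side falls short of the right-hand side by \<open>3 (t - (2 sqrt 21 - 9))\<^sup>2 / (16 sqrt 21)\<close>.\<close>
lemma nae_weighted_quadratic_le:
  fixes t :: real
  shows "(1 - 3 / sqrt 21) * ((3 + 3 * t) / 4) + 3 / sqrt 21 * ((15 - 6 * t - t ^ 2) / 16) \<le> 3 * (sqrt 21 - 4) / 2"
proof -
  define s where "s = sqrt 21"
  have s: "s > 0" "s * s = 21"
    unfolding s_def by simp_all
  have "16 * s * (3 * (s - 4) / 2 - ((1 - 3 / s) * ((3 + 3 * t) / 4) + 3 / s * ((15 - 6 * t - t ^ 2) / 16)))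
      = 24 * (s * s) - 96 * s - (4 * s * (3 + 3 * t) - 12 * (3 + 3 * t) + 3 * (15 - 6 * t - t ^ 2))"
    using s(1) by (simp add: field_simps)
  also have "\<dots> = 3 * (t - (2 * s - 9)) ^ 2 + 12 * (s * s) - 252"
    by (simp add: power2_eq_square algebra_simps)
  also have "\<dots> = 3 * (t - (2 * s - 9)) ^ 2"
    using s(2) by linarith
  finally have "0 \<le> 16 * s * (3 * (s - 4) / 2 - ((1 - 3 / s) * ((3 + 3 * t) / 4) + 3 / s * ((15 - 6 * t - t ^ 2) / 16)))"
    by simp
  then show ?thesis
    using s unfolding s_def[symmetric] by (simp add: zero_le_mult_iff)
qed

section \<open>Literals and the vectors of V\<close>

text \<open>A literal \<open>(i, s)\<close> stands for the signed basis vector \<open>s e\<^sub>i\<close>.\<close>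
definition literals :: "nat \<Rightarrow> (nat \<times> real) set" where
  "literals n = {1..n} \<times> {-1, 1}"

definition lit_neg :: "nat \<times> real \<Rightarrow> nat \<times> real" where
  "lit_neg a = (fst a, - snd a)"

definition lit_vec :: "nat \<times> real \<Rightarrow> nat \<times> real \<Rightarrow> nat \<times> real \<Rightarrow> nat \<Rightarrow> real" where
  "lit_vec a b c = vec3 (snd a) (fst a) (snd b) (fst b) (snd c) (fst c)"

lemma fst_lit_neg [simp]: "fst (lit_neg a) = fst a"
  by (simp add: lit_neg_def)

lemma snd_lit_neg [simp]: "snd (lit_neg a) = - snd a"
  by (simp add: lit_neg_def)

lemma lit_neg_lit_neg [simp]: "lit_neg (lit_neg a) = a"
  by (simp add: lit_neg_def)

lemma lit_neg_in_literals_iff [simp]: "lit_neg a \<in> literals n \<longleftrightarrow> a \<in> literals n"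
  by (cases a) (auto simp: literals_def lit_neg_def)

lemma literals_index: "a \<in> literals n \<Longrightarrow> fst a \<in> {1..n}"
  by (auto simp: literals_def)

lemma literals_sign: "a \<in> literals n \<Longrightarrow> snd a \<in> {-1, 1}"
  by (auto simp: literals_def)

lemma finite_literals [simp]: "finite (literals n)"
  by (simp add: literals_def)

lemma card_literals: "card (literals n) = 2 * n"
  by (simp add: literals_def card_cartesian_product)

lemma card_literals_with_index:
  assumes "i \<in> {1..n}"
  shows "card {a \<in> literals n. fst a = i} = 2"
proof -
  have "{a \<in> literals n. fst a = i} = {(i, -1), (i, 1)}"
    using assms by (auto simp: literals_def)
  then show ?thesis
    by simp
qed

lemma sum_literals_lit_neg: "(\<Sum>a\<in>literals n. f (lit_neg a)) = (\<Sum>a\<in>literals n. f a)"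
  by (rule sum.reindex_bij_witness[where i = lit_neg and j = lit_neg]) auto

lemma vec3_commute12: "vec3 a i b j c k = vec3 b j a i c k"
  unfolding vec3_def by (simp add: algebra_simps)

lemma vec3_commute23: "vec3 a i b j c k = vec3 a i c k b j"
  unfolding vec3_def by (simp add: algebra_simps)

lemma lit_vec_commute12: "lit_vec a b c = lit_vec b a c"
  unfolding lit_vec_def by (rule vec3_commute12)

lemma lit_vec_lit_neg: "lit_vec (lit_neg a) (lit_neg b) (lit_neg c) = (\<lambda>t. - lit_vec a b c t)"
  unfolding lit_vec_def lit_neg_def vec3_def by (simp add: fun_eq_iff field_simps)

lemma vec3_in_Vset:
  assumes "{i, j, k} \<subseteq> {1..n}" "i \<noteq> j" "i \<noteq> k" "j \<noteq> k" "{a, b, c} \<subseteq> {-1, 1}"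
  shows "vec3 a i b j c k \<in> Vset n"
proof -
  have sorted: "vec3 a' i' b' j' c' k' \<in> Vset n"
    if "1 \<le> i'" "i' < j'" "j' < k'" "k' \<le> n" "a' \<in> {-1, 1}" "b' \<in> {-1, 1}" "c' \<in> {-1, 1}"
    for a' b' c' i' j' k'
    using that unfolding Vset_def by blast
  consider "i < j" "j < k" | "i < k" "k < j" | "j < i" "i < k" | "j < k" "k < i" | "k < i" "i < j" | "k < j" "j < i"
    using assms(2-4) by linarith
  then show ?thesis
  proof cases
    case 1 then show ?thesis using sorted[of i j k a b c] assms(1,5) by auto
  next
    case 2 then show ?thesis using sorted[of i k j a c b] assms(1,5) by (auto simp: vec3_commute23)
  next
    case 3 then show ?thesis using sorted[of j i k b a c] assms(1,5) by (auto simp: vec3_commute12)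
  next
    case 4 then show ?thesis
      using sorted[of j k i b c a] assms(1,5) vec3_commute12[of a i b j c k] vec3_commute23[of b j a i c k]
      by auto
  next
    case 5 then show ?thesis
      using sorted[of k i j c a b] assms(1,5) vec3_commute23[of a i b j c k] vec3_commute12[of a i c k b j]
      by auto
  next
    case 6 then show ?thesis
      using sorted[of k j i c b a] assms(1,5) vec3_commute12[of a i b j c k] vec3_commute23[of b j a i c k]
        vec3_commute12[of b j c k a i]
      by auto
  qed
qed

lemma lit_vec_in_Vset:
  assumes "a \<in> literals n" "b \<in> literals n" "c \<in> literals n"
    and "fst a \<noteq> fst b" "fst a \<noteq> fst c" "fst b \<noteq> fst c"
  shows "lit_vec a b c \<in> Vset n"
  unfolding lit_vec_def using assms by (intro vec3_in_Vset) (auto simp: literals_def)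

section \<open>Tuples of literals\<close>

definition tuples :: "nat \<Rightarrow> nat \<Rightarrow> (nat \<Rightarrow> nat \<times> real) set" where
  "tuples n m = PiE {1..m} (\<lambda>_. literals n)"

definition distinct_tuples :: "nat \<Rightarrow> nat \<Rightarrow> (nat \<Rightarrow> nat \<times> real) set" where
  "distinct_tuples n m = {f \<in> tuples n m. inj_on (\<lambda>k. fst (f k)) {1..m}}"

lemma finite_tuples [simp]: "finite (tuples n m)"
  by (simp add: tuples_def finite_PiE)

lemma card_tuples: "card (tuples n m) = (2 * n) ^ m"
  by (simp add: tuples_def card_PiE card_literals)

lemma tuples_literal: "f \<in> tuples n m \<Longrightarrow> k \<in> {1..m} \<Longrightarrow> f k \<in> literals n"
  unfolding tuples_def by blast

lemma distinct_tuples_subset: "distinct_tuples n m \<subseteq> tuples n m"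
  by (auto simp: distinct_tuples_def)

lemma finite_distinct_tuples [simp]: "finite (distinct_tuples n m)"
  using distinct_tuples_subset finite_tuples by (rule finite_subset)

lemma distinct_tuples_literal: "f \<in> distinct_tuples n m \<Longrightarrow> k \<in> {1..m} \<Longrightarrow> f k \<in> literals n"
  using distinct_tuples_subset tuples_literal by blast

lemma distinct_tuples_undefined: "f \<in> distinct_tuples n m \<Longrightarrow> k \<notin> {1..m} \<Longrightarrow> f k = undefined"
  unfolding distinct_tuples_def tuples_def by blast

lemma distinct_tuples_index_neq:
  "f \<in> distinct_tuples n m \<Longrightarrow> k \<in> {1..m} \<Longrightarrow> l \<in> {1..m} \<Longrightarrow> k \<noteq> l \<Longrightarrow> fst (f k) \<noteq> fst (f l)"
  unfolding distinct_tuples_def inj_on_def by blast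

lemma distinct_tuples_nonempty: "m \<le> n \<Longrightarrow> distinct_tuples n m \<noteq> {}"
proof -
  assume "m \<le> n"
  then have "restrict (\<lambda>k. (k, 1)) {1..m} \<in> distinct_tuples n m"
    unfolding distinct_tuples_def tuples_def literals_def by (auto simp: inj_on_def)
  then show ?thesis
    by blast
qed

lemma card_tuples_with_equal_indices:
  assumes "k \<in> {1..m}" "l \<in> {1..m}" "k \<noteq> l"
  shows "card {f \<in> tuples n m. fst (f k) = fst (f l)} = 2 * (2 * n) ^ (m - 1)"
proof -
  define R where "R = PiE ({1..m} - {l}) (\<lambda>_. literals n)"
  have tuples: "tuples n m = PiE (insert l ({1..m} - {l})) (\<lambda>_. literals n)"
    unfolding tuples_def using assms(2) by (simp add: insert_absorb)
  have "card {f \<in> tuples n m. fst (f k) = fst (f l)} = (\<Sum>f\<in>tuples n m. of_bool (fst (f k) = fst (f l)))"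
    by (simp add: Int_def)
  also have "\<dots> = (\<Sum>a\<in>literals n. \<Sum>f\<in>R. of_bool (fst (f k) = fst a))"
    unfolding tuples R_def using assms(3) by (subst sum_PiE_insert) simp_all
  also have "\<dots> = (\<Sum>f\<in>R. card {a \<in> literals n. fst a = fst (f k)})"
    by (subst sum.swap) (simp add: Int_def eq_commute)
  also have "\<dots> = (\<Sum>f\<in>R. 2)"
  proof (rule sum.cong[OF refl])
    fix f assume "f \<in> R"
    then have "f k \<in> literals n"
      using PiE_mem[of f "{1..m} - {l}" "\<lambda>_. literals n" k] assms unfolding R_def by simp
    then show "card {a \<in> literals n. fst a = fst (f k)} = 2"
      by (rule card_literals_with_index[OF literals_index])
  qed
  also have "\<dots> = 2 * (2 * n) ^ (m - 1)"
    using assms(2) by (simp add: R_def card_PiE card_literals)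
  finally show ?thesis .
qed

lemma card_non_distinct_tuples_le:
  "card (tuples n m - distinct_tuples n m) \<le> m ^ 2 * (2 * (2 * n) ^ (m - 1))"
proof -
  define P where "P = {(k, l) \<in> {1..m} \<times> {1..m}. k \<noteq> l}"
  have finite_P: "finite P"
    unfolding P_def by (rule finite_subset[of _ "{1..m} \<times> {1..m}"]) auto
  have "tuples n m - distinct_tuples n m \<subseteq> (\<Union>(k, l)\<in>P. {f \<in> tuples n m. fst (f k) = fst (f l)})"
  proof
    fix f assume "f \<in> tuples n m - distinct_tuples n m"
    then obtain k l where "k \<in> {1..m}" "l \<in> {1..m}" "k \<noteq> l" "fst (f k) = fst (f l)" "f \<in> tuples n m"
      unfolding distinct_tuples_def inj_on_def by blast
    then show "f \<in> (\<Union>(k, l)\<in>P. {f \<in> tuples n m. fst (f k) = fst (f l)})"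
      unfolding P_def by blast
  qed
  moreover have "finite (\<Union>(k, l)\<in>P. {f \<in> tuples n m. fst (f k) = fst (f l)})"
    by (rule finite_subset[OF _ finite_tuples[of n m]]) auto
  ultimately have "card (tuples n m - distinct_tuples n m) \<le> card (\<Union>(k, l)\<in>P. {f \<in> tuples n m. fst (f k) = fst (f l)})"
    by (intro card_mono)
  also have "\<dots> \<le> (\<Sum>(k, l)\<in>P. card {f \<in> tuples n m. fst (f k) = fst (f l)})"
    using card_UN_le[OF finite_P, of "\<lambda>(k, l). {f \<in> tuples n m. fst (f k) = fst (f l)}"]
    by (simp add: case_prod_unfold)
  also have "\<dots> = card P * (2 * (2 * n) ^ (m - 1))"
    by (simp add: P_def card_tuples_with_equal_indices case_prod_unfold)
  also have "card P \<le> m ^ 2"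
  proof -
    have "card P \<le> card ({1..m} \<times> {1..m})"
      by (rule card_mono) (auto simp: P_def)
    then show ?thesis
      by (simp add: card_cartesian_product power2_eq_square)
  qed
  finally show ?thesis
    by simp
qed

lemma average_distinct_tuples_ge:
  fixes F :: "(nat \<Rightarrow> nat \<times> real) \<Rightarrow> real"
  assumes "1 \<le> m" "m \<le> n" "\<And>f. f \<in> tuples n m \<Longrightarrow> \<bar>F f\<bar> \<le> B"
  shows "(\<Sum>f\<in>tuples n m. F f) / card (tuples n m) - 2 * B * m ^ 2 / n
    \<le> (\<Sum>f\<in>distinct_tuples n m. F f) / card (distinct_tuples n m)"
proof -
  define N where "N = 2 * real n"
  have N: "N > 0"
    using assms(1,2) by (simp add: N_def)
  obtain f where "f \<in> distinct_tuples n m"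
    using distinct_tuples_nonempty[OF assms(2)] by blast
  then have "B \<ge> 0"
    using assms(3)[of f] distinct_tuples_subset by (meson abs_ge_zero order_trans subsetD)
  have "real (card (tuples n m - distinct_tuples n m)) \<le> real (m ^ 2 * (2 * (2 * n) ^ (m - 1)))"
    by (simp only: of_nat_le_iff card_non_distinct_tuples_le)
  then have "real (card (tuples n m - distinct_tuples n m)) / card (tuples n m) \<le> m ^ 2 * (2 * N ^ (m - 1)) / N ^ m"
    using N by (simp add: card_tuples N_def divide_right_mono)
  also have "\<dots> = m ^ 2 / n"
    using N power_minus_mult[OF assms(1)[unfolded One_nat_def Suc_le_eq], of N]
    by (auto simp: N_def field_simps)
  finally have "2 * B * (card (tuples n m - distinct_tuples n m) / card (tuples n m)) \<le> 2 * B * (m ^ 2 / n)"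
    using \<open>B \<ge> 0\<close> by (intro mult_left_mono) auto
  then have "2 * B * card (tuples n m - distinct_tuples n m) / card (tuples n m) \<le> 2 * B * m ^ 2 / n"
    by (simp only: times_divide_eq_right)
  moreover have "(\<Sum>f\<in>tuples n m. F f) / card (tuples n m)
      - 2 * B * card (tuples n m - distinct_tuples n m) / card (tuples n m)
    \<le> (\<Sum>f\<in>distinct_tuples n m. F f) / card (distinct_tuples n m)"
    by (rule average_subset_ge[where F = F and B = B,
          OF finite_tuples distinct_tuples_subset distinct_tuples_nonempty[OF assms(2)] assms(3)])
  ultimately show ?thesis
    by linarith
qed

section \<open>Signed permutations\<close>

definition signed_perm :: "nat \<Rightarrow> (nat \<Rightarrow> nat) \<Rightarrow> (nat \<Rightarrow> real) \<Rightarrow> bool" where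
  "signed_perm n p e \<longleftrightarrow> bij_betw p {1..n} {1..n} \<and> (\<forall>i. e i \<in> {-1, 1})"

definition lit_perm :: "(nat \<Rightarrow> nat) \<Rightarrow> (nat \<Rightarrow> real) \<Rightarrow> nat \<times> real \<Rightarrow> nat \<times> real" where
  "lit_perm p e a = (p (fst a), e (fst a) * snd a)"

definition tuple_perm ::
    "(nat \<Rightarrow> nat) \<Rightarrow> (nat \<Rightarrow> real) \<Rightarrow> nat \<Rightarrow> (nat \<Rightarrow> nat \<times> real) \<Rightarrow> nat \<Rightarrow> nat \<times> real" where
  "tuple_perm p e m f = restrict (\<lambda>k. lit_perm p e (f k)) {1..m}"

text \<open>The action on \<open>\<real>\<^sup>n\<close> of the signed permutation sending \<open>e\<^sub>i\<close> to \<open>e i \<cdot> e\<^bsub>p i\<^esub>\<close>.\<close>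
definition vec_perm :: "nat \<Rightarrow> (nat \<Rightarrow> nat) \<Rightarrow> (nat \<Rightarrow> real) \<Rightarrow> (nat \<Rightarrow> real) \<Rightarrow> nat \<Rightarrow> real" where
  "vec_perm n p e v = (\<lambda>t. if t \<in> {1..n} then e (inv_into {1..n} p t) * v (inv_into {1..n} p t) else 0)"

lemma lit_perm_lit_neg: "lit_perm p e (lit_neg a) = lit_neg (lit_perm p e a)"
  by (simp add: lit_perm_def lit_neg_def)

lemma lit_perm_in_literals: "signed_perm n p e \<Longrightarrow> a \<in> literals n \<Longrightarrow> lit_perm p e a \<in> literals n"
  unfolding signed_perm_def lit_perm_def literals_def bij_betw_def by auto

lemma tuple_perm_apply: "k \<in> {1..m} \<Longrightarrow> tuple_perm p e m f k = lit_perm p e (f k)"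
  by (simp add: tuple_perm_def)

lemma tuple_perm_outside: "k \<notin> {1..m} \<Longrightarrow> tuple_perm p e m f k = undefined"
  unfolding tuple_perm_def restrict_def by (simp only: if_not_P if_False)

lemma vec_perm_lit_vec:
  assumes p: "bij_betw p {1..n} {1..n}" and abc: "a \<in> literals n" "b \<in> literals n" "c \<in> literals n"
  shows "vec_perm n p e (lit_vec a b c) = lit_vec (lit_perm p e a) (lit_perm p e b) (lit_perm p e c)"
proof
  fix t
  have inj: "inj_on p {1..n}" and im: "p ` {1..n} = {1..n}"
    using p by (auto simp: bij_betw_def)
  have idx: "fst a \<in> {1..n}" "fst b \<in> {1..n}" "fst c \<in> {1..n}"
    using abc literals_index by blast+
  show "vec_perm n p e (lit_vec a b c) t = lit_vec (lit_perm p e a) (lit_perm p e b) (lit_perm p e c) t"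
  proof (cases "t \<in> {1..n}")
    case True
    define u where "u = inv_into {1..n} p t"
    have "t \<in> p ` {1..n}"
      using True im by simp
    then have u: "u \<in> {1..n}" "p u = t"
      unfolding u_def by (rule inv_into_into, rule f_inv_into_f)
    have ind_p: "ind (p i) t = ind i u" if "i \<in> {1..n}" for i
      using u inj that unfolding ind_def inj_on_def by metis
    have ind_e: "e u * ind i u = e i * ind i u" for i
      unfolding ind_def by simp
    have "vec_perm n p e (lit_vec a b c) t
        = (snd a * (e u * ind (fst a) u) + snd b * (e u * ind (fst b) u) + snd c * (e u * ind (fst c) u)) / sqrt 3"
      using True unfolding vec_perm_def lit_vec_def vec3_def u_def by (simp add: algebra_simps)
    also have "\<dots> = (snd a * (e (fst a) * ind (p (fst a)) t) + snd b * (e (fst b) * ind (p (fst b)) t)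
        + snd c * (e (fst c) * ind (p (fst c)) t)) / sqrt 3"
      by (simp only: ind_e ind_p idx)
    finally show ?thesis
      unfolding lit_vec_def vec3_def lit_perm_def by (simp add: algebra_simps)
  next
    case False
    then have "t \<noteq> p (fst a)" "t \<noteq> p (fst b)" "t \<noteq> p (fst c)"
      using idx im by auto
    then have "lit_vec (lit_perm p e a) (lit_perm p e b) (lit_perm p e c) t = 0"
      unfolding lit_vec_def vec3_def lit_perm_def ind_def by simp
    with False show ?thesis
      unfolding vec_perm_def by (simp only: if_not_P[OF False] if_False)
  qed
qed

lemma tuple_perm_distinct_tuples:
  assumes "signed_perm n p e" "f \<in> distinct_tuples n m"
  shows "tuple_perm p e m f \<in> distinct_tuples n m"
proof -
  have inj: "inj_on p {1..n}"
    using assms(1) by (auto simp: signed_perm_def bij_betw_def)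
  have f: "\<And>k. k \<in> {1..m} \<Longrightarrow> f k \<in> literals n"
    using assms(2) by (rule distinct_tuples_literal)
  have "tuple_perm p e m f \<in> tuples n m"
    by (simp add: tuples_def tuple_perm_def lit_perm_in_literals[OF assms(1)] f)
  moreover have "inj_on (\<lambda>k. fst (tuple_perm p e m f k)) {1..m}"
  proof (rule inj_onI)
    fix k l assume kl: "k \<in> {1..m}" "l \<in> {1..m}" "fst (tuple_perm p e m f k) = fst (tuple_perm p e m f l)"
    then have "p (fst (f k)) = p (fst (f l))"
      by (simp add: tuple_perm_apply lit_perm_def)
    then have "fst (f k) = fst (f l)"
      using inj_onD[OF inj] literals_index[OF f[OF kl(1)]] literals_index[OF f[OF kl(2)]] by blast
    then show "k = l"
      using distinct_tuples_index_neq[OF assms(2) kl(1,2)] by blast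
  qed
  ultimately show ?thesis
    by (simp add: distinct_tuples_def)
qed

lemma inj_on_tuple_perm:
  assumes "signed_perm n p e"
  shows "inj_on (tuple_perm p e m) (distinct_tuples n m)"
proof (rule inj_onI)
  fix f f' assume ff': "f \<in> distinct_tuples n m" "f' \<in> distinct_tuples n m" "tuple_perm p e m f = tuple_perm p e m f'"
  have inj: "inj_on p {1..n}"
    using assms by (simp add: signed_perm_def bij_betw_def)
  have e: "e i \<noteq> 0" for i
    using assms unfolding signed_perm_def by (metis empty_iff insert_iff zero_neq_neg_one zero_neq_one)
  show "f = f'"
  proof
    fix k
    show "f k = f' k"
    proof (cases "k \<in> {1..m}")
      case True
      have "lit_perm p e (f k) = lit_perm p e (f' k)"
        using ff'(3) True by (metis tuple_perm_apply)
      moreover have "f k \<in> literals n" "f' k \<in> literals n"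
        using ff'(1,2) True by (auto intro: distinct_tuples_literal)
      ultimately show ?thesis
        using inj e by (auto simp: lit_perm_def literals_def inj_on_def prod_eq_iff)
    next
      case False
      then show ?thesis
        using ff'(1,2) by (simp add: distinct_tuples_undefined)
    qed
  qed
qed

lemma distinct_tuples_transitive:
  assumes t: "t \<in> distinct_tuples n m" and t': "t' \<in> distinct_tuples n m"
  obtains p e where "signed_perm n p e" "tuple_perm p e m t = t'"
proof -
  define I where "I = {1..m}"
  define h where "h k = fst (t k)" for k
  define h' where "h' k = fst (t' k)" for k
  have inj: "inj_on h I" "inj_on h' I"
    using t t' unfolding h_def h'_def I_def distinct_tuples_def by auto
  have lits: "t k \<in> literals n" "t' k \<in> literals n" if "k \<in> I" for k
    using that t t' unfolding I_def by (auto intro: distinct_tuples_literal)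
  have "bij_betw (h' \<circ> inv_into I h) (h ` I) (h' ` I)"
    using bij_betw_inv_into[OF inj_on_imp_bij_betw[OF inj(1)]] inj_on_imp_bij_betw[OF inj(2)]
    by (rule bij_betw_trans)
  moreover have "h ` I \<subseteq> {1..n}" "h' ` I \<subseteq> {1..n}"
    using lits literals_index unfolding h_def h'_def by blast+
  ultimately obtain p where p: "bij_betw p {1..n} {1..n}" "\<And>i. i \<in> h ` I \<Longrightarrow> p i = h' (inv_into I h i)"
    using bij_betw_extend_to_permutation[of "{1..n}"] by (metis comp_apply finite_atLeastAtMost)
  define e where "e i = (if i \<in> h ` I then snd (t' (inv_into I h i)) * snd (t (inv_into I h i)) else 1)" for i
  have "e i \<in> {-1, 1}" for i
  proof (cases "i \<in> h ` I")
    case True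
    then have j: "inv_into I h i \<in> I"
      by (rule inv_into_into)
    show ?thesis
      using True literals_sign[OF lits(1)[OF j]] literals_sign[OF lits(2)[OF j]] unfolding e_def by auto
  qed (simp add: e_def)
  with p(1) have "signed_perm n p e"
    by (simp add: signed_perm_def)
  moreover have "tuple_perm p e m t = t'"
  proof
    fix k
    show "tuple_perm p e m t k = t' k"
    proof (cases "k \<in> I")
      case True
      have "inv_into I h (h k) = k"
        using inj(1) True by (simp add: inv_into_f_f)
      moreover have "snd (t' k) * snd (t k) * snd (t k) = snd (t' k)"
        using lits[OF True] by (auto simp: literals_def)
      ultimately show ?thesis
        using True p(2)[of "h k"] unfolding tuple_perm_def lit_perm_def e_def I_def h_def h'_def
        by (simp add: prod_eq_iff)
    next
      case False
      then show ?thesis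
        using t' unfolding I_def by (metis tuple_perm_outside distinct_tuples_undefined)
    qed
  qed
  ultimately show ?thesis
    using that by blast
qed

lemma average_image_distinct_tuples:
  fixes h :: "(nat \<Rightarrow> real) list \<Rightarrow> real"
  assumes "m \<le> n"
    and equivariant: "\<And>p e u. signed_perm n p e \<Longrightarrow> u \<in> distinct_tuples n m \<Longrightarrow>
      g (tuple_perm p e m u) = map (vec_perm n p e) (g u)"
  shows "(\<Sum>c\<in>g ` distinct_tuples n m. h c) / card (g ` distinct_tuples n m)
    = (\<Sum>t\<in>distinct_tuples n m. h (g t)) / card (distinct_tuples n m)"
proof -
  obtain t0 where "t0 \<in> distinct_tuples n m"
    using distinct_tuples_nonempty[OF assms(1)] by blast
  then show ?thesis
  proof (rule average_image_eq_if_transitive[OF finite_distinct_tuples])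
    fix t t' assume "t \<in> distinct_tuples n m" "t' \<in> distinct_tuples n m"
    then obtain p e where "signed_perm n p e" "tuple_perm p e m t = t'"
      by (rule distinct_tuples_transitive)
    then show "\<exists>\<sigma> \<tau>. \<sigma> ` distinct_tuples n m \<subseteq> distinct_tuples n m \<and> inj_on \<sigma> (distinct_tuples n m)
        \<and> \<sigma> t = t' \<and> (\<forall>u\<in>distinct_tuples n m. g (\<sigma> u) = \<tau> (g u))"
      using tuple_perm_distinct_tuples inj_on_tuple_perm equivariant by blast
  qed
qed

section \<open>Clauses as images of tuples\<close>

definition clause3 :: "(nat \<Rightarrow> nat \<times> real) \<Rightarrow> (nat \<Rightarrow> real) list" where
  "clause3 f = [lit_vec (f 1) (lit_neg (f 2)) (f 4), lit_vec (f 2) (lit_neg (f 3)) (f 5),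
    lit_vec (f 3) (lit_neg (f 1)) (f 6)]"

definition clause5 :: "(nat \<Rightarrow> nat \<times> real) \<Rightarrow> (nat \<Rightarrow> real) list" where
  "clause5 f = [lit_vec (f 1) (f 2) (f 3), lit_vec (f 1) (f 4) (f 5), lit_vec (f 1) (f 6) (f 7),
    lit_vec (f 1) (f 8) (f 9), lit_vec (f 10) (f 11) (f 12)]"

lemma params_imp_distinct_tuple:
  assumes "params n m i s"
  shows "restrict (\<lambda>k. (i k, s k)) {1..m} \<in> distinct_tuples n m"
proof -
  have "inj_on (\<lambda>k. fst (restrict (\<lambda>k. (i k, s k)) {1..m} k)) {1..m} \<longleftrightarrow> inj_on i {1..m}"
    by (rule inj_on_cong) simp
  then show ?thesis
    using assms unfolding params_def distinct_tuples_def tuples_def literals_def by auto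
qed

lemma distinct_tuple_imp_params:
  assumes "f \<in> distinct_tuples n m"
  shows "params n m (\<lambda>k. fst (f k)) (\<lambda>k. snd (f k))"
  using assms literals_index[OF distinct_tuples_literal] literals_sign[OF distinct_tuples_literal]
  unfolding params_def distinct_tuples_def by blast

lemma C3_eq_image: "C3 n = clause3 ` distinct_tuples n 6"
proof
  show "C3 n \<subseteq> clause3 ` distinct_tuples n 6"
  proof
    fix c assume "c \<in> C3 n"
    then obtain i s where c: "c = [vec3 (s 1) (i 1) (- s 2) (i 2) (s 4) (i 4),
        vec3 (s 2) (i 2) (- s 3) (i 3) (s 5) (i 5), vec3 (s 3) (i 3) (- s 1) (i 1) (s 6) (i 6)]"
      and "params n 6 i s"
      unfolding C3_def by blast
    moreover have "clause3 (restrict (\<lambda>k. (i k, s k)) {1..6}) = c"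
      unfolding c clause3_def lit_vec_def lit_neg_def by simp
    ultimately show "c \<in> clause3 ` distinct_tuples n 6"
      using params_imp_distinct_tuple by force
  qed
  show "clause3 ` distinct_tuples n 6 \<subseteq> C3 n"
    unfolding C3_def clause3_def lit_vec_def lit_neg_def
    using distinct_tuple_imp_params by fastforce
qed

lemma C5_eq_image: "C5 n = clause5 ` distinct_tuples n 12"
proof
  show "C5 n \<subseteq> clause5 ` distinct_tuples n 12"
  proof
    fix c assume "c \<in> C5 n"
    then obtain i s where c: "c = map (\<lambda>j. vec3 (s 1) (i 1) (s (2*j)) (i (2*j)) (s (2*j+1)) (i (2*j+1))) [1,2,3,4]
        @ [vec3 (s 10) (i 10) (s 11) (i 11) (s 12) (i 12)]"
      and "params n 12 i s"
      unfolding C5_def by blast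
    moreover have "clause5 (restrict (\<lambda>k. (i k, s k)) {1..12}) = c"
      unfolding c clause5_def lit_vec_def by simp
    ultimately show "c \<in> clause5 ` distinct_tuples n 12"
      using params_imp_distinct_tuple by force
  qed
  show "clause5 ` distinct_tuples n 12 \<subseteq> C5 n"
    unfolding C5_def clause5_def lit_vec_def
    using distinct_tuple_imp_params by fastforce
qed

lemma clause3_tuple_perm:
  assumes "signed_perm n p e" "u \<in> distinct_tuples n 6"
  shows "clause3 (tuple_perm p e 6 u) = map (vec_perm n p e) (clause3 u)"
proof -
  have "u k \<in> literals n" if "k \<in> {1..6}" for k
    using assms(2) that by (rule distinct_tuples_literal)
  then show ?thesis
    using assms(1) unfolding signed_perm_def
    by (simp add: clause3_def tuple_perm_apply vec_perm_lit_vec lit_perm_lit_neg)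
qed

lemma clause5_tuple_perm:
  assumes "signed_perm n p e" "u \<in> distinct_tuples n 12"
  shows "clause5 (tuple_perm p e 12 u) = map (vec_perm n p e) (clause5 u)"
proof -
  have "u k \<in> literals n" if "k \<in> {1..12}" for k
    using assms(2) that by (rule distinct_tuples_literal)
  then show ?thesis
    using assms(1) unfolding signed_perm_def
    by (simp add: clause5_def tuple_perm_apply vec_perm_lit_vec)
qed

lemma average_C3:
  fixes h :: "(nat \<Rightarrow> real) list \<Rightarrow> real"
  assumes "6 \<le> n"
  shows "(\<Sum>c\<in>C3 n. h c) / card (C3 n) = (\<Sum>t\<in>distinct_tuples n 6. h (clause3 t)) / card (distinct_tuples n 6)"
  unfolding C3_eq_image using assms clause3_tuple_perm by (rule average_image_distinct_tuples)

lemma average_C5: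
  fixes h :: "(nat \<Rightarrow> real) list \<Rightarrow> real"
  assumes "12 \<le> n"
  shows "(\<Sum>c\<in>C5 n. h c) / card (C5 n) = (\<Sum>t\<in>distinct_tuples n 12. h (clause5 t)) / card (distinct_tuples n 12)"
  unfolding C5_eq_image using assms clause5_tuple_perm by (rule average_image_distinct_tuples)

definition nae_fraction :: "(nat \<Rightarrow> real) list set \<Rightarrow> ((nat \<Rightarrow> real) \<Rightarrow> real) \<Rightarrow> real" where
  "nae_fraction C x = (\<Sum>c\<in>C. of_bool (NAE (map x c))) / card C"

lemma sat_weight_eq:
  "sat_weight n x = (1 - 3 / sqrt 21) * nae_fraction (C3 n) x + 3 / sqrt 21 * nae_fraction (C5 n) x"
proof -
  have indicator: "(if P then a else 0) = a * of_bool P" for P and a :: real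
    by simp
  show ?thesis
    unfolding sat_weight_def nae_fraction_def indicator sum_distrib_left[symmetric] by simp
qed

section \<open>Odd assignments\<close>

locale odd_assignment =
  fixes n :: nat and x :: "(nat \<Rightarrow> real) \<Rightarrow> real"
  assumes x_Vset: "v \<in> Vset n \<Longrightarrow> x v \<in> {-1, 1}"
    and x_odd: "v \<in> Vset n \<Longrightarrow> x (\<lambda>t. - v t) = - x v"
begin

text \<open>Extended by \<open>0\<close> to triples with a repeated index, so that sums may range over all triples.\<close>
definition xval :: "nat \<times> real \<Rightarrow> nat \<times> real \<Rightarrow> nat \<times> real \<Rightarrow> real" where
  "xval a b c = (if fst a \<noteq> fst b \<and> fst a \<noteq> fst c \<and> fst b \<noteq> fst c then x (lit_vec a b c) else 0)"

lemma xval_commute12: "xval a b c = xval b a c"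
  unfolding xval_def using lit_vec_commute12 by auto

lemma xval_lit_neg:
  assumes "a \<in> literals n" "b \<in> literals n" "c \<in> literals n"
  shows "xval (lit_neg a) (lit_neg b) (lit_neg c) = - xval a b c"
  using lit_vec_in_Vset[OF assms] x_odd unfolding xval_def by (auto simp: lit_vec_lit_neg)

lemma xval_distinct:
  assumes "a \<in> literals n" "b \<in> literals n" "c \<in> literals n"
    and "fst a \<noteq> fst b" "fst a \<noteq> fst c" "fst b \<noteq> fst c"
  shows "xval a b c = x (lit_vec a b c)" "xval a b c \<in> {-1, 1}"
  using lit_vec_in_Vset[OF assms] x_Vset assms(4-6) unfolding xval_def by auto

lemma abs_xval_le:
  assumes "a \<in> literals n" "b \<in> literals n" "c \<in> literals n"
  shows "\<bar>xval a b c\<bar> \<le> 1"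
  using xval_distinct(2)[OF assms] by (cases "fst a \<noteq> fst b \<and> fst a \<noteq> fst c \<and> fst b \<noteq> fst c") (auto simp: xval_def)

definition bias :: "nat \<times> real \<Rightarrow> real" where
  "bias a = (\<Sum>b\<in>literals n. \<Sum>c\<in>literals n. xval a b c)"

lemma bias_lit_neg:
  assumes "a \<in> literals n"
  shows "bias (lit_neg a) = - bias a"
proof -
  have "bias (lit_neg a) = (\<Sum>b\<in>literals n. \<Sum>c\<in>literals n. xval (lit_neg a) (lit_neg b) (lit_neg c))"
    unfolding bias_def by (subst sum_literals_lit_neg[symmetric]) (simp only: sum_literals_lit_neg)
  also have "\<dots> = - bias a"
    using assms by (simp add: bias_def xval_lit_neg sum_negf)
  finally show ?thesis .
qed

lemma sum_bias: "(\<Sum>a\<in>literals n. bias a) = 0"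
proof -
  have "(\<Sum>a\<in>literals n. bias a) = (\<Sum>a\<in>literals n. bias (lit_neg a))"
    by (simp only: sum_literals_lit_neg)
  also have "\<dots> = - (\<Sum>a\<in>literals n. bias a)"
    by (simp add: bias_lit_neg sum_negf)
  finally show ?thesis
    by simp
qed

lemma sum_xval_lit_neg_middle:
  assumes "a \<in> literals n"
  shows "(\<Sum>b\<in>literals n. \<Sum>c\<in>literals n. xval b (lit_neg a) c) = - bias a"
  using bias_lit_neg[OF assms] unfolding bias_def by (simp add: xval_commute12[of _ "lit_neg a"])

lemma sum_xval_lit_neg_second: "(\<Sum>b\<in>literals n. \<Sum>c\<in>literals n. xval a (lit_neg b) c) = bias a"
  unfolding bias_def by (rule sum_literals_lit_neg)

text \<open>The pair products of the cubic clause: the literal shared by the two vectors occurs negated in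
  one of them, so the two factors average to \<open>- bias a\<close> and \<open>bias a\<close>.\<close>
lemma sum_tuples_xval_pair:
  assumes "{1..6} = {q, p, u, r, v, w}" "distinct [q, p, u, r, v, w]"
  shows "(\<Sum>f\<in>tuples n 6. xval (f p) (lit_neg (f q)) (f u) * xval (f q) (lit_neg (f r)) (f v))
    = - (2 * real n) * (\<Sum>a\<in>literals n. bias a ^ 2)"
proof -
  let ?L = "literals n"
  have "(\<Sum>f\<in>tuples n 6. xval (f p) (lit_neg (f q)) (f u) * xval (f q) (lit_neg (f r)) (f v))
    = (\<Sum>a\<in>?L. \<Sum>b\<in>?L. \<Sum>c\<in>?L. \<Sum>d\<in>?L. \<Sum>g\<in>?L. \<Sum>_\<in>?L.
        xval b (lit_neg a) c * xval a (lit_neg d) g)"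
    unfolding tuples_def assms(1) using assms(2) by (simp add: sum_PiE_insert PiE_empty_domain card_PiE eq_commute)
  also have "\<dots> = 2 * real n * (\<Sum>a\<in>?L. \<Sum>b\<in>?L. \<Sum>c\<in>?L. \<Sum>d\<in>?L. \<Sum>g\<in>?L.
        xval b (lit_neg a) c * xval a (lit_neg d) g)"
    by (simp add: sum_distrib_left card_literals)
  also have "\<dots> = 2 * real n * (\<Sum>a\<in>?L. (\<Sum>b\<in>?L. \<Sum>c\<in>?L. xval b (lit_neg a) c)
        * (\<Sum>d\<in>?L. \<Sum>g\<in>?L. xval a (lit_neg d) g))"
    by (simp only: sum_distrib_right) (simp only: sum_distrib_left)
  also have "\<dots> = 2 * real n * (\<Sum>a\<in>?L. - bias a * bias a)"
    by (simp add: sum_xval_lit_neg_middle sum_xval_lit_neg_second)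
  finally show ?thesis
    by (simp add: power2_eq_square sum_negf)
qed

text \<open>On \<open>\<plusminus>1\<close>-values these are the indicators that all values of the clause agree
  (\<open>NAE3_eq_poly\<close>, \<open>NAE5_eq_poly\<close>); as polynomials they extend to all tuples.\<close>
definition all_equal3 :: "(nat \<Rightarrow> nat \<times> real) \<Rightarrow> real" where
  "all_equal3 f = (1 + xval (f 1) (lit_neg (f 2)) (f 4) * xval (f 2) (lit_neg (f 3)) (f 5)
    + xval (f 2) (lit_neg (f 3)) (f 5) * xval (f 3) (lit_neg (f 1)) (f 6)
    + xval (f 3) (lit_neg (f 1)) (f 6) * xval (f 1) (lit_neg (f 2)) (f 4)) / 4"

definition vals5 :: "(nat \<Rightarrow> nat \<times> real) \<Rightarrow> real list" where
  "vals5 f = [xval (f 1) (f 2) (f 3), xval (f 1) (f 4) (f 5), xval (f 1) (f 6) (f 7),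
    xval (f 1) (f 8) (f 9), xval (f 10) (f 11) (f 12)]"

definition prod5 :: "real \<Rightarrow> (nat \<Rightarrow> nat \<times> real) \<Rightarrow> real" where
  "prod5 e f = prod_list (map (\<lambda>y. 1 + e * y) (vals5 f))"

definition all_equal5 :: "(nat \<Rightarrow> nat \<times> real) \<Rightarrow> real" where
  "all_equal5 f = (prod5 1 f + prod5 (-1) f) / 32"

lemma NAE_clause3_eq:
  assumes "t \<in> distinct_tuples n 6"
  shows "of_bool (NAE (map x (clause3 t))) = 1 - all_equal3 t"
proof -
  have lit: "t k \<in> literals n" if "k \<in> {1..6}" for k
    using assms that by (rule distinct_tuples_literal)
  have idx: "fst (t k) \<noteq> fst (t l)" if "k \<in> {1..6}" "l \<in> {1..6}" "k \<noteq> l" for k l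
    using assms that by (rule distinct_tuples_index_neq)
  note x_eq = xval_distinct(1)[symmetric] and x_sign = xval_distinct(2)
  have "map x (clause3 t) = [xval (t 1) (lit_neg (t 2)) (t 4), xval (t 2) (lit_neg (t 3)) (t 5),
      xval (t 3) (lit_neg (t 1)) (t 6)]"
    by (simp add: clause3_def x_eq lit idx)
  moreover have "xval (t 1) (lit_neg (t 2)) (t 4) \<in> {-1, 1}" "xval (t 2) (lit_neg (t 3)) (t 5) \<in> {-1, 1}"
      "xval (t 3) (lit_neg (t 1)) (t 6) \<in> {-1, 1}"
    by (rule x_sign; simp add: lit idx)+
  ultimately show ?thesis
    by (simp add: NAE3_eq_poly all_equal3_def)
qed

lemma NAE_clause5_eq:
  assumes "t \<in> distinct_tuples n 12"
  shows "of_bool (NAE (map x (clause5 t))) = 1 - all_equal5 t"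
proof -
  have lit: "t k \<in> literals n" if "k \<in> {1..12}" for k
    using assms that by (rule distinct_tuples_literal)
  have idx: "fst (t k) \<noteq> fst (t l)" if "k \<in> {1..12}" "l \<in> {1..12}" "k \<noteq> l" for k l
    using assms that by (rule distinct_tuples_index_neq)
  note x_eq = xval_distinct(1)[symmetric] and x_sign = xval_distinct(2)
  have "map x (clause5 t) = vals5 t"
    by (simp add: clause5_def vals5_def x_eq lit idx)
  moreover have "xval (t 1) (t 2) (t 3) \<in> {-1, 1}" "xval (t 1) (t 4) (t 5) \<in> {-1, 1}"
      "xval (t 1) (t 6) (t 7) \<in> {-1, 1}" "xval (t 1) (t 8) (t 9) \<in> {-1, 1}"
      "xval (t 10) (t 11) (t 12) \<in> {-1, 1}"
    by (rule x_sign; simp add: lit idx)+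
  ultimately show ?thesis
    by (simp add: NAE5_eq_poly all_equal5_def prod5_def vals5_def mult.assoc)
qed

lemma abs_all_equal3_le:
  assumes "f \<in> tuples n 6"
  shows "\<bar>all_equal3 f\<bar> \<le> 1"
proof -
  have lit: "f k \<in> literals n" if "k \<in> {1..6}" for k
    using assms that by (rule tuples_literal)
  define a b c where "a = xval (f 1) (lit_neg (f 2)) (f 4)" and "b = xval (f 2) (lit_neg (f 3)) (f 5)"
    and "c = xval (f 3) (lit_neg (f 1)) (f 6)"
  have "\<bar>a\<bar> \<le> 1" "\<bar>b\<bar> \<le> 1" "\<bar>c\<bar> \<le> 1"
    unfolding a_def b_def c_def by (rule abs_xval_le; simp add: lit)+
  then have "\<bar>a * b\<bar> \<le> 1" "\<bar>b * c\<bar> \<le> 1" "\<bar>c * a\<bar> \<le> 1"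
    by (simp_all add: abs_mult mult_le_one)
  then show ?thesis
    unfolding all_equal3_def a_def[symmetric] b_def[symmetric] c_def[symmetric] by (simp add: abs_le_iff)
qed

lemma abs_all_equal5_le:
  assumes "f \<in> tuples n 12"
  shows "\<bar>all_equal5 f\<bar> \<le> 2"
proof -
  have lit: "f k \<in> literals n" if "k \<in> {1..12}" for k
    using assms that by (rule tuples_literal)
  have vals: "\<bar>y\<bar> \<le> 1" if "y \<in> set (vals5 f)" for y
    using that unfolding vals5_def by (auto intro!: abs_xval_le simp: lit)
  have "0 \<le> prod5 e f \<and> prod5 e f \<le> 32" if e: "e \<in> {-1, 1}" for e
  proof -
    have factors: "0 \<le> z \<and> z \<le> 2" if z: "z \<in> set (map (\<lambda>y. 1 + e * y) (vals5 f))" for z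
    proof -
      obtain y where "y \<in> set (vals5 f)" "z = 1 + e * y"
        using z by auto
      then show ?thesis
        using e vals[of y] by (auto simp: abs_le_iff)
    qed
    then have "prod5 e f \<le> 2 ^ length (map (\<lambda>y. 1 + e * y) (vals5 f))"
      unfolding prod5_def by (rule prod_list_le_power)
    moreover have "0 \<le> prod5 e f"
      unfolding prod5_def using factors by (intro prod_list_nonneg) blast
    ultimately show ?thesis
      by (simp add: vals5_def)
  qed
  from this[of 1] this[of "-1"] show ?thesis
    unfolding all_equal5_def by (simp add: abs_le_iff)
qed

lemma sum_all_equal3:
  "(\<Sum>f\<in>tuples n 6. all_equal3 f) = ((2 * real n) ^ 6 - 3 * (2 * real n) * (\<Sum>a\<in>literals n. bias a ^ 2)) / 4"
proof -
  have "(\<Sum>f\<in>tuples n 6. xval (f 1) (lit_neg (f 2)) (f 4) * xval (f 2) (lit_neg (f 3)) (f 5))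
      = - (2 * real n) * (\<Sum>a\<in>literals n. bias a ^ 2)"
    by (rule sum_tuples_xval_pair[of 2 1 4 3 5 6]) auto
  moreover have "(\<Sum>f\<in>tuples n 6. xval (f 2) (lit_neg (f 3)) (f 5) * xval (f 3) (lit_neg (f 1)) (f 6))
      = - (2 * real n) * (\<Sum>a\<in>literals n. bias a ^ 2)"
    by (rule sum_tuples_xval_pair[of 3 2 5 1 6 4]) auto
  moreover have "(\<Sum>f\<in>tuples n 6. xval (f 3) (lit_neg (f 1)) (f 6) * xval (f 1) (lit_neg (f 2)) (f 4))
      = - (2 * real n) * (\<Sum>a\<in>literals n. bias a ^ 2)"
    by (rule sum_tuples_xval_pair[of 1 3 6 2 4 5]) auto
  ultimately show ?thesis
    unfolding all_equal3_def
    by (simp only: sum_divide_distrib[symmetric] sum.distrib) (simp add: card_tuples)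
qed

lemma sum_xval_pair: "(\<Sum>b\<in>literals n. \<Sum>c\<in>literals n. 1 + e * xval a b c) = (2 * real n) ^ 2 + e * bias a"
  unfolding bias_def by (simp add: sum.distrib sum_distrib_left card_literals power2_eq_square)

lemma sum_xval_triple:
  "(\<Sum>a\<in>literals n. \<Sum>b\<in>literals n. \<Sum>c\<in>literals n. 1 + e * xval a b c) = (2 * real n) ^ 3"
proof -
  have "(\<Sum>a\<in>literals n. \<Sum>b\<in>literals n. \<Sum>c\<in>literals n. 1 + e * xval a b c)
      = (\<Sum>a\<in>literals n. (2 * real n) ^ 2) + e * (\<Sum>a\<in>literals n. bias a)"
    by (simp only: sum_xval_pair) (simp add: sum.distrib sum_distrib_left)
  then show ?thesis
    by (simp add: sum_bias card_literals power2_eq_square power3_eq_cube)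
qed

lemma sum_prod5:
  "(\<Sum>f\<in>tuples n 12. prod5 e f) = (2 * real n) ^ 3 * (\<Sum>a\<in>literals n. ((2 * real n) ^ 2 + e * bias a) ^ 4)"
proof -
  let ?L = "literals n" and ?y = "\<lambda>a b c. 1 + e * xval a b c"
  have "{1..12::nat} = {1, 2, 3, 4, 5, 6, 7, 8, 9, 10, 11, 12}"
    by (rule set_eqI) (simp only: atLeastAtMost_iff insert_iff empty_iff; arith)
  then have "(\<Sum>f\<in>tuples n 12. prod5 e f) = (\<Sum>a\<in>?L. \<Sum>b2\<in>?L. \<Sum>b3\<in>?L. \<Sum>b4\<in>?L. \<Sum>b5\<in>?L.
      \<Sum>b6\<in>?L. \<Sum>b7\<in>?L. \<Sum>b8\<in>?L. \<Sum>b9\<in>?L. \<Sum>b10\<in>?L. \<Sum>b11\<in>?L. \<Sum>b12\<in>?L.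
      ?y a b2 b3 * (?y a b4 b5 * (?y a b6 b7 * (?y a b8 b9 * ?y b10 b11 b12))))"
    unfolding tuples_def by (simp add: sum_PiE_insert PiE_empty_domain prod5_def vals5_def)
  also have "\<dots> = (\<Sum>a\<in>?L. (\<Sum>b\<in>?L. \<Sum>c\<in>?L. ?y a b c) * ((\<Sum>b\<in>?L. \<Sum>c\<in>?L. ?y a b c)
      * ((\<Sum>b\<in>?L. \<Sum>c\<in>?L. ?y a b c) * ((\<Sum>b\<in>?L. \<Sum>c\<in>?L. ?y a b c)
      * (\<Sum>a\<in>?L. \<Sum>b\<in>?L. \<Sum>c\<in>?L. ?y a b c)))))"
    by (simp only: sum_distrib_right) (simp only: sum_distrib_left)
  also have "\<dots> = (\<Sum>a\<in>?L. ((2 * real n) ^ 2 + e * bias a) ^ 4 * (2 * real n) ^ 3)"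
    by (simp only: sum_xval_triple) (simp only: sum_xval_pair power4_eq_xxxx mult_ac)
  finally show ?thesis
    by (simp add: sum_distrib_left mult_ac)
qed

lemma sum_all_equal5:
  "(\<Sum>f\<in>tuples n 12. all_equal5 f) = (2 * real n) ^ 3 * (2 * (2 * real n) ^ 9
    + 12 * (2 * real n) ^ 4 * (\<Sum>a\<in>literals n. bias a ^ 2) + 2 * (\<Sum>a\<in>literals n. bias a ^ 4)) / 32"
proof -
  define N where "N = 2 * real n"
  have binomial: "(N ^ 2 + d) ^ 4 + (N ^ 2 + - 1 * d) ^ 4 = 2 * N ^ 8 + 12 * N ^ 4 * d ^ 2 + 2 * d ^ 4" for d
    by (simp add: power2_eq_square power4_eq_xxxx algebra_simps eval_nat_numeral)
  have "(\<Sum>f\<in>tuples n 12. all_equal5 f) = N ^ 3 * (\<Sum>a\<in>literals n. (N ^ 2 + bias a) ^ 4 + (N ^ 2 + - 1 * bias a) ^ 4) / 32"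
    unfolding all_equal5_def N_def
    by (simp add: sum_divide_distrib[symmetric] sum.distrib sum_prod5 distrib_left del: mult_minus_left)
  also have "\<dots> = N ^ 3 * (\<Sum>a\<in>literals n. 2 * N ^ 8 + 12 * N ^ 4 * bias a ^ 2 + 2 * bias a ^ 4) / 32"
    by (simp only: binomial)
  also have "\<dots> = N ^ 3 * (2 * N ^ 9 + 12 * N ^ 4 * (\<Sum>a\<in>literals n. bias a ^ 2) + 2 * (\<Sum>a\<in>literals n. bias a ^ 4)) / 32"
    by (simp add: sum.distrib sum_distrib_left card_literals N_def power_Suc[symmetric] del: power_Suc)
  finally show ?thesis
    unfolding N_def .
qed

text \<open>With \<open>\<beta> a = bias a / N\<^sup>2\<close> and \<open>N = 2 n\<close> literals, these are the means of \<open>\<beta>\<^sup>2\<close> and \<open>\<beta>\<^sup>4\<close>.\<close>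
definition bias_moment2 :: real where
  "bias_moment2 = (\<Sum>a\<in>literals n. bias a ^ 2) / (2 * real n) ^ 5"

definition bias_moment4 :: real where
  "bias_moment4 = (\<Sum>a\<in>literals n. bias a ^ 4) / (2 * real n) ^ 9"

lemma bias_moment2_sq_le: "bias_moment2 ^ 2 \<le> bias_moment4"
proof -
  define N where "N = 2 * real n"
  define Q2 where "Q2 = (\<Sum>a\<in>literals n. bias a ^ 2)"
  define Q4 where "Q4 = (\<Sum>a\<in>literals n. bias a ^ 4)"
  have "Q2 ^ 2 \<le> N * Q4"
    using sum_squares_squared_le[of bias "literals n"] by (simp add: card_literals N_def Q2_def Q4_def)
  then have "Q2 ^ 2 / N ^ 10 \<le> N * Q4 / N ^ 10"
    by (simp add: divide_right_mono)
  moreover have "bias_moment2 ^ 2 = Q2 ^ 2 / N ^ 10"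
    unfolding bias_moment2_def N_def[symmetric] Q2_def[symmetric] by (simp add: power_divide flip: power_mult)
  moreover have "N * Q4 / N ^ 10 = bias_moment4"
  proof -
    have "N ^ 10 = N * N ^ 9"
      by (simp flip: power_Suc)
    then show ?thesis
      unfolding bias_moment4_def N_def[symmetric] Q4_def[symmetric] by (cases "N = 0") simp_all
  qed
  ultimately show ?thesis
    by simp
qed

lemma average_all_equal3:
  assumes "0 < n"
  shows "(\<Sum>f\<in>tuples n 6. all_equal3 f) / card (tuples n 6) = (1 - 3 * bias_moment2) / 4"
  using assms unfolding sum_all_equal3 card_tuples bias_moment2_def by (simp add: field_simps eval_nat_numeral)

lemma average_all_equal5:
  assumes "0 < n"
  shows "(\<Sum>f\<in>tuples n 12. all_equal5 f) / card (tuples n 12) = (1 + 6 * bias_moment2 + bias_moment4) / 16"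
proof -
  define N where "N = 2 * real n"
  have N: "N ^ 3 > 0" "N ^ 4 > 0" "N ^ 5 > 0"
    using assms by (simp_all add: N_def)
  have card: "real (card (tuples n 12)) = N ^ 3 * (N ^ 4 * N ^ 5)" and N9: "N ^ 9 = N ^ 4 * N ^ 5"
    by (simp_all add: card_tuples N_def flip: power_add)
  have "A * (2 * (B * C) + 12 * B * Q2 + 2 * Q4) / 32 / (A * (B * C)) = (1 + 6 * (Q2 / C) + Q4 / (B * C)) / 16"
    if "A > 0" "B > 0" "C > 0" for A B C Q2 Q4 :: real
    using that by (simp add: field_simps)
  from this[OF N] show ?thesis
    unfolding sum_all_equal5 bias_moment2_def bias_moment4_def N_def[symmetric] card N9 .
qed

lemma nae_fraction_C3_le:
  assumes "6 \<le> n"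
  shows "nae_fraction (C3 n) x \<le> (3 + 3 * bias_moment2) / 4 + 72 / n"
proof -
  define A where "A = (\<Sum>t\<in>distinct_tuples n 6. all_equal3 t) / card (distinct_tuples n 6)"
  have "nae_fraction (C3 n) x = 1 - A"
    unfolding nae_fraction_def average_C3[OF assms] A_def
    using distinct_tuples_nonempty[of 6 n] assms by (simp add: NAE_clause3_eq average_one_minus cong: sum.cong)
  moreover have "(1 - 3 * bias_moment2) / 4 - 72 / n \<le> A"
    unfolding A_def using average_distinct_tuples_ge[of 6 n all_equal3 1] average_all_equal3 abs_all_equal3_le assms by simp
  ultimately show ?thesis
    by argo
qed

lemma nae_fraction_C5_le:
  assumes "12 \<le> n"
  shows "nae_fraction (C5 n) x \<le> (15 - 6 * bias_moment2 - bias_moment2 ^ 2) / 16 + 576 / n"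
proof -
  define A where "A = (\<Sum>t\<in>distinct_tuples n 12. all_equal5 t) / card (distinct_tuples n 12)"
  have "nae_fraction (C5 n) x = 1 - A"
    unfolding nae_fraction_def average_C5[OF assms] A_def
    using distinct_tuples_nonempty[of 12 n] assms by (simp add: NAE_clause5_eq average_one_minus cong: sum.cong)
  moreover have "(1 + 6 * bias_moment2 + bias_moment4) / 16 - 576 / n \<le> A"
    unfolding A_def using average_distinct_tuples_ge[of 12 n all_equal5 2] average_all_equal5 abs_all_equal5_le assms by simp
  ultimately show ?thesis
    using bias_moment2_sq_le by argo
qed

lemma sat_weight_le:
  assumes "12 \<le> n"
  shows "sat_weight n x \<le> 3 * (sqrt 21 - 4) / 2 + 576 / n"
proof -
  define w where "w = 3 / sqrt 21"
  have w: "0 \<le> w" "w \<le> 1"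
    unfolding w_def by (simp_all add: real_le_rsqrt)
  have "sat_weight n x \<le> (1 - w) * ((3 + 3 * bias_moment2) / 4 + 72 / n)
      + w * ((15 - 6 * bias_moment2 - bias_moment2 ^ 2) / 16 + 576 / n)"
    unfolding sat_weight_eq w_def[symmetric] using w nae_fraction_C3_le nae_fraction_C5_le assms
    by (intro add_mono mult_left_mono) auto
  also have "\<dots> \<le> 3 * (sqrt 21 - 4) / 2 + ((1 - w) * (72 / n) + w * (576 / n))"
    using nae_weighted_quadratic_le[of bias_moment2] unfolding w_def[symmetric] by (simp add: algebra_simps)
  also have "\<dots> \<le> 3 * (sqrt 21 - 4) / 2 + 576 / n"
  proof -
    have "(1 - w) * (72 / n) \<le> (1 - w) * (576 / n)"
      using w by (intro mult_left_mono divide_right_mono) auto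
    then show ?thesis
      by argo
  qed
  finally show ?thesis .
qed

end

theorem mainTheorem7:
  shows "\<exists>C::real. C > 0 \<and> (\<exists>n0::nat. \<forall>n \<ge> n0. \<forall>x :: (nat \<Rightarrow> real) \<Rightarrow> real.
           (\<forall>v \<in> Vset n. x v \<in> {-1, 1} \<and> x (\<lambda>t. - v t) = - x v) \<longrightarrow>
           sat_weight n x \<le> 3 * (sqrt 21 - 4) / 2 + C / real n)"
proof (intro exI conjI allI impI)
  show "(576::real) > 0"
    by simp
  fix n :: nat and x :: "(nat \<Rightarrow> real) \<Rightarrow> real"
  assume "n \<ge> 12" and "\<forall>v \<in> Vset n. x v \<in> {-1, 1} \<and> x (\<lambda>t. - v t) = - x v"
  then have "odd_assignment n x"
    by unfold_locales auto
  with \<open>n \<ge> 12\<close> show "sat_weight n x \<le> 3 * (sqrt 21 - 4) / 2 + 576 / real n"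
    by (rule odd_assignment.sat_weight_le[rotated])
qed

end
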